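(* Let $\mathbb{X}$ be a finite-dimensional real Euclidean space and let $\boldsymbol{M}_1,\boldsymbol{M}_2:\mathbb{X}\rightrightarrows\mathbb{X}$ be such that $\boldsymbol{M}_1$, $\boldsymbol{M}_2$ and $\boldsymbol{M}_1+\boldsymbol{M}_2$ are maximal monotone and $\operatorname{Zer}(\boldsymbol{M}_1+\boldsymbol{M}_2)\neq\emptyset$. Let $\sigma>0$, $\eta^0\in\mathbb{X}$, and let $\{w^k,x^k,v^k,\eta^k\}_{k\ge1}$ be generated by the HPR iteration: for $k\ge0$, $w^{k+1}=\boldsymbol{J}_{\sigma\boldsymbol{M}_2}(\eta^k)$, $x^{k+1}=\boldsymbol{J}_{\sigma\boldsymbol{M}_1}(2w^{k+1}-\eta^k)$, $v^{k+1}=2x^{k+1}-(2w^{k+1}-\eta^k)$, $\eta^{k+1}=\frac{1}{k+2}\eta^0+\frac{k+1}{k+2}v^{k+1}$. Let $\eta^*:=\Pi_{\operatorname{Fix}(\mathbf{T}^{\rm PR}_\sigma)}(\eta^0)$ and $w^*:=\boldsymbol{J}_{\sigma\boldsymbol{M}_2}(\eta^* )$. Then $\eta^k\to\eta^*$, $v^k\to\eta^*$, $x^k\to w^*$, $w^k\to w^*$, and $w^*\in\operatorname{Zer}(\boldsymbol{M}_1+\boldsymbol{M}_2)$, i.e. $0\in\boldsymbol{M}_1w^*+\boldsymbol{M}_2w^*$.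
   Context: For a maximal monotone $\boldsymbol{M}$, $\boldsymbol{J}_{\boldsymbol{M}}:=(\boldsymbol{I}+\boldsymbol{M})^{-1}$ is its resolvent and $\boldsymbol{R}_{\boldsymbol{M}}:=2\boldsymbol{J}_{\boldsymbol{M}}-\boldsymbol{I}$ its reflected resolvent. The Peaceman–Rachford operator is $\mathbf{T}^{\rm PR}_\sigma:=\boldsymbol{R}_{\sigma\boldsymbol{M}_1}\circ\boldsymbol{R}_{\sigma\boldsymbol{M}_2}$, $\operatorname{Fix}(\cdot)$ is the set of fixed points, and $\Pi_C$ is the Euclidean projection onto a closed convex set $C$. *)

theory Defs
  imports "HOL-Analysis.Analysis"
begin

definition monotone_op :: "('a::real_inner \<Rightarrow> 'a set) \<Rightarrow> bool" where
  "monotone_op M \<longleftrightarrow> (\<forall>x y u v. u \<in> M x \<longrightarrow> v \<in> M y \<longrightarrow> inner (x - y) (u - v) \<ge> 0)"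

definition maximal_monotone :: "('a::real_inner \<Rightarrow> 'a set) \<Rightarrow> bool" where
  "maximal_monotone M \<longleftrightarrow> monotone_op M \<and>
     (\<forall>x u. (\<forall>y v. v \<in> M y \<longrightarrow> inner (x - y) (u - v) \<ge> 0) \<longrightarrow> u \<in> M x)"

definition op_sum :: "('a::real_vector \<Rightarrow> 'a set) \<Rightarrow> ('a \<Rightarrow> 'a set) \<Rightarrow> ('a \<Rightarrow> 'a set)" where
  "op_sum M1 M2 = (\<lambda>x. {u + v | u v. u \<in> M1 x \<and> v \<in> M2 x})"

definition op_scale :: "real \<Rightarrow> ('a::real_vector \<Rightarrow> 'a set) \<Rightarrow> ('a \<Rightarrow> 'a set)" where
  "op_scale c M = (\<lambda>x. (\<lambda>u. c *\<^sub>R u) ` M x)"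

definition zer :: "('a::real_vector \<Rightarrow> 'a set) \<Rightarrow> 'a set" where
  "zer M = {x. 0 \<in> M x}"

text \<open>Resolvent J_M = (I + M)^{-1}: J_M z is the point x with z \<in> x + M x
  (single-valued and total for maximal monotone M, by Minty's theorem).\<close>
definition resolvent :: "('a::real_vector \<Rightarrow> 'a set) \<Rightarrow> 'a \<Rightarrow> 'a" where
  "resolvent M z = (THE x. z - x \<in> M x)"

definition refl_resolvent :: "('a::real_vector \<Rightarrow> 'a set) \<Rightarrow> 'a \<Rightarrow> 'a" where
  "refl_resolvent M z = 2 *\<^sub>R resolvent M z - z"

definition PR_op :: "real \<Rightarrow> ('a::real_vector \<Rightarrow> 'a set) \<Rightarrow> ('a \<Rightarrow> 'a set) \<Rightarrow> 'a \<Rightarrow> 'a" where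
  "PR_op \<sigma> M1 M2 = refl_resolvent (op_scale \<sigma> M1) \<circ> refl_resolvent (op_scale \<sigma> M2)"

definition fixpoints :: "('a \<Rightarrow> 'a) \<Rightarrow> 'a set" where
  "fixpoints T = {z. T z = z}"

end

theory Submission
  imports Defs
begin

text \<open>
  The HPR scheme is Halpern's iteration
  \<open>\<eta>\<^sup>k\<^sup>+\<^sup>1 = \<eta>\<^sup>0 / (k + 2) + (k + 1) / (k + 2) \<cdot> T \<eta>\<^sup>k\<close>
  for the Peaceman-Rachford operator \<open>T = R\<^sub>1 \<circ> R\<^sub>2\<close>, with \<open>v\<^sup>k\<^sup>+\<^sup>1 = T \<eta>\<^sup>k\<close>.
  Reflected resolvents of maximal monotone operators are nonexpansive, so \<open>T\<close> is nonexpansive;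
  its fixed point set is nonempty, because \<open>z - \<sigma> a\<close> is fixed whenever \<open>a \<in> M\<^sub>1 z\<close> and
  \<open>-a \<in> M\<^sub>2 z\<close>. In finite dimension Halpern's iteration converges to the projection of the
  anchor \<open>\<eta>\<^sup>0\<close> onto \<open>Fix T\<close>: the iterates stay bounded, \<open>\<eta>\<^sup>k - T \<eta>\<^sup>k \<rightarrow> 0\<close>, every cluster point
  is a fixed point, and the variational inequality of the projection turns the recursion for
  \<open>(k + 1) \<parallel>\<eta>\<^sup>k - \<eta>\<^sup>*\<parallel>\<^sup>2\<close> into convergence. The sequences \<open>w\<close>, \<open>x\<close>, \<open>v\<close> are continuous images of
  \<open>\<eta>\<close>, and \<open>J\<^sub>\<sigma>\<^sub>M\<^sub>2\<close> maps \<open>Fix T\<close> into \<open>Zer (M\<^sub>1 + M\<^sub>2)\<close>.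

  That resolvents are everywhere defined is Minty's theorem, proved here for finite dimension:
  a monotone set \<open>G\<close> of pairs \<open>(a, c)\<close> admits a point \<open>x\<close> with \<open>\<langle>x - a, x + c\<rangle> \<le> 0\<close> for all
  pairs. For finite \<open>G\<close>, take a minimiser of the maximum of these quadratics; first-order
  optimality puts \<open>0\<close> in the convex hull of the active gradients, and monotonicity makes the
  corresponding convex combination of the quadratics nonpositive. Each sublevel set is a
  ball, so compactness passes to infinite \<open>G\<close>.
\<close>

section \<open>Monotone sets of pairs\<close>

definition monotone_set :: "('a::real_inner \<times> 'a) set \<Rightarrow> bool" where
  "monotone_set G \<longleftrightarrow> (\<forall>(x, u)\<in>G. \<forall>(y, v)\<in>G. 0 \<le> inner (x - y) (u - v))"

lemma monotone_set_subset: "monotone_set G \<Longrightarrow> H \<subseteq> G \<Longrightarrow> monotone_set H"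
  unfolding monotone_set_def by blast

lemma inner_diff_add_eq:
  fixes x a c :: "'a::real_inner"
  shows "inner (x - a) (x + c) = (dist x ((1/2) *\<^sub>R (a - c)))\<^sup>2 - (norm (a + c) / 2)\<^sup>2"
  by (simp add: dist_norm power2_norm_eq_inner power_divide inner_commute algebra_simps)

lemma bounded_inner_diff_add_sublevel:
  fixes a c :: "'a::real_inner"
  shows "bounded {x. inner (x - a) (x + c) \<le> t}"
proof -
  have "dist x ((1/2) *\<^sub>R (a - c)) \<le> sqrt (t + (norm (a + c) / 2)\<^sup>2)"
    if "inner (x - a) (x + c) \<le> t" for x
    using that by (intro real_le_rsqrt) (simp add: inner_diff_add_eq)
  then show ?thesis
    by (intro bounded_subset[OF bounded_cball]) (auto simp: dist_commute)
qed

lemma weighted_double_sum_inner_diff: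
  fixes a c :: "'i \<Rightarrow> 'a::real_inner"
  assumes "sum u I = 1"
  shows "(\<Sum>i\<in>I. \<Sum>j\<in>I. u i * u j * inner (a i - a j) (c i - c j))
    = 2 * ((\<Sum>i\<in>I. u i * inner (a i) (c i)) - inner (\<Sum>i\<in>I. u i *\<^sub>R a i) (\<Sum>i\<in>I. u i *\<^sub>R c i))"
proof -
  define A where "A = (\<Sum>i\<in>I. u i *\<^sub>R a i)"
  define C where "C = (\<Sum>i\<in>I. u i *\<^sub>R c i)"
  have AC: "inner A C = (\<Sum>i\<in>I. \<Sum>j\<in>I. u i * u j * inner (a j) (c i))"
    by (simp add: A_def C_def inner_sum_left inner_sum_right sum_distrib_left mult.assoc)
  also have "\<dots> = (\<Sum>i\<in>I. \<Sum>j\<in>I. u i * u j * inner (a i) (c j))"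
    by (rule sum.swap[THEN trans]) (simp add: mult.commute)
  finally have CA: "inner A C = \<dots>" .
  have "(\<Sum>i\<in>I. \<Sum>j\<in>I. u i * u j * inner (a i - a j) (c i - c j))
      = (\<Sum>i\<in>I. \<Sum>j\<in>I. u i * u j * inner (a i) (c i))
      + (\<Sum>i\<in>I. \<Sum>j\<in>I. u i * u j * inner (a j) (c j))
      - (\<Sum>i\<in>I. \<Sum>j\<in>I. u i * u j * inner (a i) (c j))
      - (\<Sum>i\<in>I. \<Sum>j\<in>I. u i * u j * inner (a j) (c i))"
    by (simp add: inner_diff_left inner_diff_right algebra_simps sum.distrib sum_subtractf)
  also have "\<dots> = 2 * ((\<Sum>i\<in>I. u i * inner (a i) (c i)) - inner A C)"
    unfolding AC[symmetric] CA[symmetric]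
    by (simp add: sum_distrib_left[symmetric] sum_distrib_right[symmetric] assms mult.assoc mult.left_commute)
  finally show ?thesis
    by (simp add: A_def C_def)
qed

lemma monotone_family_convex_combination:
  fixes a c :: "'i \<Rightarrow> 'a::real_inner"
  assumes "finite I" and u_nonneg: "\<And>i. i \<in> I \<Longrightarrow> 0 \<le> u i" and u_sum: "sum u I = 1"
    and mono: "\<And>i j. i \<in> I \<Longrightarrow> j \<in> I \<Longrightarrow> 0 \<le> inner (a i - a j) (c i - c j)"
    and x: "2 *\<^sub>R x = (\<Sum>i\<in>I. u i *\<^sub>R a i) - (\<Sum>i\<in>I. u i *\<^sub>R c i)"
  shows "(\<Sum>i\<in>I. u i * inner (x - a i) (x + c i)) \<le> 0"
proof -
  define A where "A = (\<Sum>i\<in>I. u i *\<^sub>R a i)"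
  define C where "C = (\<Sum>i\<in>I. u i *\<^sub>R c i)"
  define S where "S = (\<Sum>i\<in>I. u i * inner (a i) (c i))"
  have "0 \<le> (\<Sum>i\<in>I. \<Sum>j\<in>I. u i * u j * inner (a i - a j) (c i - c j))"
    using u_nonneg mono by (intro sum_nonneg) auto
  then have "inner A C \<le> S"
    unfolding weighted_double_sum_inner_diff[OF u_sum] A_def C_def S_def by simp
  have "(\<Sum>i\<in>I. u i * inner (x - a i) (x + c i)) = inner x x - inner x (A - C) - S"
    by (simp add: A_def C_def S_def inner_sum_left inner_sum_right algebra_simps sum.distrib
        sum_subtractf sum_distrib_right[symmetric] u_sum inner_commute)
  also have "A - C = 2 *\<^sub>R x"
    using x by (simp add: A_def C_def)
  also have "inner x x - inner x (2 *\<^sub>R x) - S \<le> - (inner x x + inner A C)"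
    using \<open>inner A C \<le> S\<close> by simp
  also have "inner x x + inner A C = inner (A + C) (A + C) / 4"
    using \<open>A - C = 2 *\<^sub>R x\<close> by (simp add: eq_diff_eq inner_add_left inner_add_right
        inner_commute algebra_simps)
  also have "- (inner (A + C) (A + C) / 4) \<le> 0"
    by simp
  finally show ?thesis .
qed

lemma continuous_on_Max:
  fixes f :: "'i \<Rightarrow> 'a::topological_space \<Rightarrow> 'b::linorder_topology"
  assumes "finite P" "P \<noteq> {}" "\<And>p. p \<in> P \<Longrightarrow> continuous_on S (f p)"
  shows "continuous_on S (\<lambda>x. Max ((\<lambda>p. f p x) ` P))"
  using assms
proof (induction P rule: finite_ne_induct)
  case (insert p P)
  then have "continuous_on S (\<lambda>x. max (f p x) (Max ((\<lambda>p. f p x) ` P)))"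
    by (intro continuous_on_max) auto
  with insert show ?case
    by simp
qed simp

lemma continuous_attains_min_bounded_sublevel:
  fixes h :: "'a::heine_borel \<Rightarrow> real"
  assumes "continuous_on UNIV h" and "bounded {x. h x \<le> h a}"
  obtains x0 where "\<And>y. h x0 \<le> h y"
proof -
  let ?S = "{x. h x \<le> h a}"
  have "compact ?S"
    using assms by (simp add: compact_eq_bounded_closed closed_Collect_le)
  moreover have "a \<in> ?S"
    by simp
  ultimately obtain x0 where "x0 \<in> ?S" and "\<forall>y\<in>?S. h x0 \<le> h y"
    using continuous_attains_inf[of ?S h] continuous_on_subset[OF assms(1)] by blast
  then have "h x0 \<le> h y" for y
    by (cases "y \<in> ?S") auto
  then show ?thesis
    using that by blast
qed

lemma eventually_at_right_0_quadratic_less: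
  fixes \<alpha> \<beta> \<gamma> m :: real
  assumes "\<alpha> < m \<or> \<alpha> = m \<and> \<beta> < 0"
  shows "eventually (\<lambda>t. \<alpha> + t * (\<beta> + t * \<gamma>) < m) (at_right 0)"
  using assms
proof
  assume "\<alpha> < m"
  have "((\<lambda>t. \<alpha> + t * (\<beta> + t * \<gamma>)) \<longlongrightarrow> \<alpha> + 0 * (\<beta> + 0 * \<gamma>)) (at_right 0)"
    by (intro tendsto_intros)
  with \<open>\<alpha> < m\<close> show ?thesis
    using order_tendstoD(2) by fastforce
next
  assume "\<alpha> = m \<and> \<beta> < 0"
  then have "\<alpha> = m" and "\<beta> < 0"
    by simp_all
  have "((\<lambda>t. \<beta> + t * \<gamma>) \<longlongrightarrow> \<beta> + 0 * \<gamma>) (at_right 0)"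
    by (intro tendsto_intros)
  then have "eventually (\<lambda>t. \<beta> + t * \<gamma> < 0) (at_right (0::real))"
    using \<open>\<beta> < 0\<close> order_tendstoD(2) by fastforce
  moreover have "eventually (\<lambda>t. 0 < t) (at_right (0::real))"
    by (simp add: eventually_at_right_less)
  ultimately show ?thesis
    by eventually_elim (simp add: \<open>\<alpha> = m\<close> mult_pos_neg)
qed

lemma minimizer_of_max_zero_in_convex_hull:
  fixes g :: "'p \<Rightarrow> 'a::euclidean_space \<Rightarrow> real"
  assumes "finite P"
    and le_m: "\<And>p. p \<in> P \<Longrightarrow> g p x0 \<le> m"
    and min: "\<And>y. \<exists>p\<in>P. m \<le> g p y"
    and expand: "\<And>p t d. g p (x0 + t *\<^sub>R d) = g p x0 + t * (inner d (v p) + t * q p d)"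
  shows "0 \<in> convex hull (v ` {p\<in>P. g p x0 = m})"
proof (rule ccontr)
  let ?A = "{p\<in>P. g p x0 = m}"
  assume "0 \<notin> convex hull (v ` ?A)"
  moreover have "closed (convex hull (v ` ?A))"
    using \<open>finite P\<close> by (simp add: compact_imp_closed compact_convex_hull finite_imp_compact)
  ultimately obtain a b where "0 < b" and sep: "\<forall>y\<in>convex hull (v ` ?A). b < inner a y"
    using separating_hyperplane_closed_0[OF convex_convex_hull] by blast
  have descent: "inner (- a) (v p) < 0" if "p \<in> ?A" for p
    using \<open>0 < b\<close> sep hull_inc[OF imageI[OF that]] by fastforce
  have "eventually (\<lambda>t. g p (x0 + t *\<^sub>R (- a)) < m) (at_right 0)" if "p \<in> P" for p
    unfolding expand using le_m[OF that] descent[of p] that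
    by (intro eventually_at_right_0_quadratic_less) auto
  then have "eventually (\<lambda>t. \<forall>p\<in>P. g p (x0 + t *\<^sub>R (- a)) < m) (at_right 0)"
    using \<open>finite P\<close> by (simp add: eventually_ball_finite)
  then obtain t :: real where "\<forall>p\<in>P. g p (x0 + t *\<^sub>R (- a)) < m"
    using eventually_happens trivial_limit_at_right_real by blast
  then show False
    using min[of "x0 + t *\<^sub>R (- a)"] by fastforce
qed

lemma monotone_set_zero_in_convex_hull:
  fixes A :: "('a::real_inner \<times> 'a) set"
  assumes "finite A" and "monotone_set A"
    and "0 \<in> convex hull ((\<lambda>p. 2 *\<^sub>R x - fst p + snd p) ` A)"
  shows "\<exists>p\<in>A. inner (x - fst p) (x + snd p) \<le> 0"
proof (rule ccontr)
  define v where "v p = 2 *\<^sub>R x - fst p + snd p" for p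
  define p where "p = inv_into A v"
  have p: "p y \<in> A" "v (p y) = y" if "y \<in> v ` A" for y
    using that by (simp_all add: p_def inv_into_into f_inv_into_f)
  have "finite (v ` A)"
    using \<open>finite A\<close> by simp
  with assms(3) obtain u where u_nonneg: "\<forall>y\<in>v ` A. 0 \<le> u y" and u_sum: "sum u (v ` A) = 1"
    and u_comb: "(\<Sum>y\<in>v ` A. u y *\<^sub>R y) = 0"
    by (auto simp: convex_hull_finite v_def)
  have "(\<Sum>y\<in>v ` A. u y * inner (x - fst (p y)) (x + snd (p y))) \<le> 0"
  proof (rule monotone_family_convex_combination)
    show "0 \<le> inner (fst (p y) - fst (p z)) (snd (p y) - snd (p z))" if "y \<in> v ` A" "z \<in> v ` A" for y z
      using \<open>monotone_set A\<close> p(1)[OF that(1)] p(1)[OF that(2)] unfolding monotone_set_def by fastforce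
    have "0 = (\<Sum>y\<in>v ` A. u y *\<^sub>R (2 *\<^sub>R x - fst (p y) + snd (p y)))"
      using u_comb p(2) by (simp add: v_def)
    then show "2 *\<^sub>R x = (\<Sum>y\<in>v ` A. u y *\<^sub>R fst (p y)) - (\<Sum>y\<in>v ` A. u y *\<^sub>R snd (p y))"
      using u_sum by (simp add: scaleR_add_right scaleR_diff_right sum.distrib sum_subtractf
          flip: scaleR_sum_left sum_distrib_right) (simp add: algebra_simps)
  qed (use \<open>finite (v ` A)\<close> u_nonneg u_sum in auto)
  moreover assume "\<not> (\<exists>p\<in>A. inner (x - fst p) (x + snd p) \<le> 0)"
  then have pos: "0 < inner (x - fst (p y)) (x + snd (p y))" if "y \<in> v ` A" for y
    using p(1)[OF that] by fastforce
  then have "\<forall>y\<in>v ` A. 0 \<le> u y * inner (x - fst (p y)) (x + snd (p y))"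
    using u_nonneg by (simp add: less_imp_le)
  ultimately have "\<forall>y\<in>v ` A. u y * inner (x - fst (p y)) (x + snd (p y)) = 0"
    using \<open>finite (v ` A)\<close> sum_nonneg sum_nonneg_eq_0_iff by (metis (no_types, lifting) antisym)
  then have "\<forall>y\<in>v ` A. u y = 0"
    using pos by fastforce
  then have "sum u (v ` A) = 0"
    by (rule sum.neutral)
  then show False
    using u_sum by simp
qed

lemma Max_inner_diff_add_attains_min:
  fixes P :: "('a::euclidean_space \<times> 'a) set"
  assumes "finite P" and "P \<noteq> {}"
  obtains x0 where
    "\<And>y. (MAX p\<in>P. inner (x0 - fst p) (x0 + snd p)) \<le> (MAX p\<in>P. inner (y - fst p) (y + snd p))"
proof -
  define h where "h x = (MAX p\<in>P. inner (x - fst p) (x + snd p))" for x :: 'a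
  have "continuous_on UNIV h"
    unfolding h_def using assms by (intro continuous_on_Max continuous_intros)
  moreover obtain p0 where "p0 \<in> P"
    using assms(2) by auto
  then have "inner (x - fst p0) (x + snd p0) \<le> h 0" if "h x \<le> h 0" for x
    using that assms(1) by (auto simp: h_def intro: order_trans[OF Max_ge])
  then have "bounded {x. h x \<le> h 0}"
    by (intro bounded_subset[OF bounded_inner_diff_add_sublevel]) auto
  ultimately show ?thesis
    using that continuous_attains_min_bounded_sublevel unfolding h_def by blast
qed

lemma monotone_set_finite_common_point:
  fixes P :: "('a::euclidean_space \<times> 'a) set"
  assumes "finite P" and "monotone_set P"
  shows "\<exists>x. \<forall>p\<in>P. inner (x - fst p) (x + snd p) \<le> 0"
proof (cases "P = {}")
  case False
  define g where "g p x = inner (x - fst p) (x + snd p)" for p :: "'a \<times> 'a" and x :: 'a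
  define h where "h x = Max ((\<lambda>p. g p x) ` P)" for x
  have g_le_h: "g p x \<le> h x" if "p \<in> P" for p x
    unfolding h_def using \<open>finite P\<close> that by simp
  obtain x0 where x0: "\<And>y. h x0 \<le> h y"
    using Max_inner_diff_add_attains_min[OF \<open>finite P\<close> False] unfolding h_def g_def by blast
  have min: "\<exists>p\<in>P. h x0 \<le> g p y" for y
  proof -
    have "h y \<in> (\<lambda>p. g p y) ` P"
      unfolding h_def using \<open>finite P\<close> False by (intro Max_in) auto
    then show ?thesis
      using x0[of y] by auto
  qed
  define A where "A = {p\<in>P. g p x0 = h x0}"
  have expand: "g p (x0 + t *\<^sub>R d) = g p x0 + t * (inner d (2 *\<^sub>R x0 - fst p + snd p) + t * inner d d)"
    for p t d
    by (simp add: g_def inner_commute algebra_simps)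
  have hull: "0 \<in> convex hull ((\<lambda>p. 2 *\<^sub>R x0 - fst p + snd p) ` A)"
    unfolding A_def
    by (rule minimizer_of_max_zero_in_convex_hull[where q="\<lambda>p d. inner d d", OF \<open>finite P\<close> g_le_h min expand])
  have "finite A" and "monotone_set A"
    using assms by (auto simp: A_def intro: monotone_set_subset)
  then obtain q where "q \<in> A" and "g q x0 \<le> 0"
    unfolding g_def using monotone_set_zero_in_convex_hull[OF _ _ hull] by blast
  then have "g p x0 \<le> 0" if "p \<in> P" for p
    using g_le_h[OF that, of x0] by (simp add: A_def)
  then show ?thesis
    unfolding g_def by blast
qed simp

lemma monotone_set_common_point:
  fixes G :: "('a::euclidean_space \<times> 'a) set"
  assumes "monotone_set G"
  shows "\<exists>x. \<forall>p\<in>G. inner (x - fst p) (x + snd p) \<le> 0"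
proof -
  define K where "K p = {x. inner (x - fst p) (x + snd p) \<le> 0}" for p :: "'a \<times> 'a"
  have "compact T" if "T \<in> K ` G" for T
  proof -
    obtain p where "T = K p"
      using \<open>T \<in> K ` G\<close> by blast
    moreover have "closed (K p)"
      unfolding K_def by (intro closed_Collect_le continuous_intros)
    ultimately show ?thesis
      by (simp add: compact_eq_bounded_closed K_def bounded_inner_diff_add_sublevel)
  qed
  moreover have "\<Inter>F \<noteq> {}" if F: "finite F" "F \<subseteq> K ` G" for F
  proof -
    obtain P where "P \<subseteq> G" and "finite P" and "F = K ` P"
      using finite_subset_image[OF F] by blast
    moreover obtain x where "\<forall>p\<in>P. inner (x - fst p) (x + snd p) \<le> 0"
      using monotone_set_finite_common_point[OF \<open>finite P\<close> monotone_set_subset[OF assms \<open>P \<subseteq> G\<close>]]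
      by blast
    ultimately have "x \<in> \<Inter>F"
      by (simp add: K_def)
    then show ?thesis
      by blast
  qed
  ultimately have "\<Inter>(K ` G) \<noteq> {}"
    by (rule compact_fip_Heine_Borel)
  then show ?thesis
    by (auto simp: K_def)
qed

section \<open>Maximal monotone operators and resolvents\<close>

lemma maximal_monotone_imp_monotone_op: "maximal_monotone M \<Longrightarrow> monotone_op M"
  by (simp add: maximal_monotone_def)

lemma monotone_opD: "monotone_op M \<Longrightarrow> u \<in> M x \<Longrightarrow> v \<in> M y \<Longrightarrow> 0 \<le> inner (x - y) (u - v)"
  by (simp add: monotone_op_def)

lemma maximal_monotoneD:
  "maximal_monotone M \<Longrightarrow> (\<And>y v. v \<in> M y \<Longrightarrow> 0 \<le> inner (x - y) (u - v)) \<Longrightarrow> u \<in> M x"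
  by (simp add: maximal_monotone_def)

theorem maximal_monotone_minty:
  fixes M :: "'a::euclidean_space \<Rightarrow> 'a set"
  assumes "maximal_monotone M"
  shows "\<exists>x. z - x \<in> M x"
proof -
  let ?G = "{(a, b - z) | a b. b \<in> M a}"
  have "monotone_set ?G"
    using monotone_opD[OF maximal_monotone_imp_monotone_op[OF assms]]
    by (auto simp: monotone_set_def)
  then obtain x where x: "\<forall>p\<in>?G. inner (x - fst p) (x + snd p) \<le> 0"
    using monotone_set_common_point by blast
  have "0 \<le> inner (x - y) ((z - x) - v)" if "v \<in> M y" for y v
  proof -
    have "inner (x - y) (x + (v - z)) \<le> 0"
      using x that by fastforce
    moreover have "inner (x - y) ((z - x) - v) = - inner (x - y) (x + (v - z))"
      by (simp add: inner_diff_right inner_add_right)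
    ultimately show ?thesis
      by simp
  qed
  then show ?thesis
    using maximal_monotoneD[OF assms] by blast
qed

lemma maximal_monotone_op_scale:
  assumes "maximal_monotone M" and "0 < \<sigma>"
  shows "maximal_monotone (op_scale \<sigma> M)"
  unfolding maximal_monotone_def monotone_op_def
proof safe
  fix x y u v
  assume "u \<in> op_scale \<sigma> M x" "v \<in> op_scale \<sigma> M y"
  then obtain u' v' where "u' \<in> M x" "v' \<in> M y" "u = \<sigma> *\<^sub>R u'" "v = \<sigma> *\<^sub>R v'"
    by (auto simp: op_scale_def)
  then show "0 \<le> inner (x - y) (u - v)"
    using monotone_opD[OF maximal_monotone_imp_monotone_op[OF assms(1)]] \<open>0 < \<sigma>\<close>
    by (simp flip: scaleR_diff_right)
next
  fix x u
  assume max: "\<forall>y v. v \<in> op_scale \<sigma> M y \<longrightarrow> 0 \<le> inner (x - y) (u - v)"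
  have "0 \<le> inner (x - y) ((1 / \<sigma>) *\<^sub>R u - v)" if "v \<in> M y" for y v
  proof -
    have "0 \<le> inner (x - y) (u - \<sigma> *\<^sub>R v)"
      using max that by (auto simp: op_scale_def)
    also have "u - \<sigma> *\<^sub>R v = \<sigma> *\<^sub>R ((1 / \<sigma>) *\<^sub>R u - v)"
      using \<open>0 < \<sigma>\<close> by (simp add: algebra_simps)
    finally show ?thesis
      using \<open>0 < \<sigma>\<close> by (simp add: zero_le_mult_iff)
  qed
  then have "(1 / \<sigma>) *\<^sub>R u \<in> M x"
    by (rule maximal_monotoneD[OF assms(1)])
  then show "u \<in> op_scale \<sigma> M x"
    using \<open>0 < \<sigma>\<close> by (force simp: op_scale_def)
qed

lemma resolvent_eqI:
  assumes "monotone_op M" and "z - x \<in> M x"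
  shows "resolvent M z = x"
  unfolding resolvent_def
proof (rule the_equality)
  fix y
  assume "z - y \<in> M y"
  from monotone_opD[OF assms(1) this assms(2)] have "(norm (y - x))\<^sup>2 \<le> 0"
    by (simp add: power2_norm_eq_inner inner_diff_right inner_commute)
  then show "y = x"
    by simp
qed (fact assms(2))

lemma resolvent_mem:
  fixes M :: "'a::euclidean_space \<Rightarrow> 'a set"
  assumes "maximal_monotone M"
  shows "z - resolvent M z \<in> M (resolvent M z)"
  using maximal_monotone_minty[OF assms] resolvent_eqI[OF maximal_monotone_imp_monotone_op[OF assms]]
  by metis

lemma resolvent_firmly_nonexpansive:
  fixes M :: "'a::euclidean_space \<Rightarrow> 'a set"
  assumes "maximal_monotone M"
  shows "(norm (resolvent M z - resolvent M z'))\<^sup>2 \<le> inner (resolvent M z - resolvent M z') (z - z')"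
  using monotone_opD[OF maximal_monotone_imp_monotone_op[OF assms] resolvent_mem[OF assms, of z]
      resolvent_mem[OF assms, of z']]
  by (simp add: power2_norm_eq_inner inner_diff_right algebra_simps)

lemma resolvent_lipschitz:
  fixes M :: "'a::euclidean_space \<Rightarrow> 'a set"
  assumes "maximal_monotone M"
  shows "1-lipschitz_on UNIV (resolvent M)"
proof (rule lipschitz_onI)
  fix z z'
  let ?d = "resolvent M z - resolvent M z'"
  have "(norm ?d)\<^sup>2 \<le> norm ?d * norm (z - z')"
    using resolvent_firmly_nonexpansive[OF assms, of z z'] norm_cauchy_schwarz[of ?d "z - z'"]
    by linarith
  then have "norm ?d \<le> norm (z - z')"
    by (cases "norm ?d = 0") (auto simp: power2_eq_square)
  then show "dist (resolvent M z) (resolvent M z') \<le> 1 * dist z z'"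
    by (simp add: dist_norm)
qed simp

lemma refl_resolvent_lipschitz:
  fixes M :: "'a::euclidean_space \<Rightarrow> 'a set"
  assumes "maximal_monotone M"
  shows "1-lipschitz_on UNIV (refl_resolvent M)"
proof (rule lipschitz_onI)
  fix z z'
  let ?d = "resolvent M z - resolvent M z'" and ?e = "z - z'"
  have "refl_resolvent M z - refl_resolvent M z' = 2 *\<^sub>R ?d - ?e"
    by (simp add: refl_resolvent_def algebra_simps)
  moreover have "(norm (2 *\<^sub>R ?d - ?e))\<^sup>2 = (norm ?e)\<^sup>2 - 4 * (inner ?d ?e - (norm ?d)\<^sup>2)"
    by (simp add: power2_norm_eq_inner inner_diff_left inner_diff_right inner_commute)
  ultimately have "(norm (refl_resolvent M z - refl_resolvent M z'))\<^sup>2 \<le> (norm ?e)\<^sup>2"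
    using resolvent_firmly_nonexpansive[OF assms, of z z'] by simp
  then show "dist (refl_resolvent M z) (refl_resolvent M z') \<le> 1 * dist z z'"
    by (simp add: dist_norm power2_le_iff_abs_le)
qed simp

section \<open>Nonexpansive maps and Halpern's iteration\<close>

lemma closed_fixpoints:
  fixes T :: "'a::t2_space \<Rightarrow> 'a"
  assumes "continuous_on UNIV T"
  shows "closed (fixpoints T)"
  unfolding fixpoints_def using assms by (intro closed_Collect_eq continuous_on_id)

lemma convex_fixpoints:
  fixes T :: "'a::real_inner \<Rightarrow> 'a"
  assumes "1-lipschitz_on UNIV T"
  shows "convex (fixpoints T)"
  unfolding convex_alt
proof (intro ballI allI impI)
  fix p q and t :: real
  assume "p \<in> fixpoints T" "q \<in> fixpoints T" and t: "0 \<le> t \<and> t \<le> 1"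
  then have "T p = p" "T q = q"
    by (simp_all add: fixpoints_def)
  define z where "z = (1 - t) *\<^sub>R p + t *\<^sub>R q"
  define D where "D = norm (p - q)"
  have "norm (T z - p) \<le> norm (z - p)" and "norm (T z - q) \<le> norm (z - q)"
    using lipschitz_on_normD[OF assms, of z p] lipschitz_on_normD[OF assms, of z q] \<open>T p = p\<close> \<open>T q = q\<close>
    by simp_all
  moreover have "z - p = t *\<^sub>R (q - p)" and "z - q = (1 - t) *\<^sub>R (p - q)"
    by (simp_all add: z_def algebra_simps)
  ultimately have "norm (T z - p) \<le> t * D" and "norm (T z - q) \<le> (1 - t) * D"
    using t by (simp_all add: D_def norm_minus_commute)
  then have "(norm (T z - p))\<^sup>2 \<le> (t * D)\<^sup>2" and "(norm (T z - q))\<^sup>2 \<le> ((1 - t) * D)\<^sup>2"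
    by (simp_all add: power_mono)
  moreover have "(norm (T z - z))\<^sup>2 = (1 - t) * (norm (T z - p))\<^sup>2 + t * (norm (T z - q))\<^sup>2 - t * (1 - t) * D\<^sup>2"
    unfolding z_def D_def power2_norm_eq_inner
    by (simp add: inner_diff_left inner_diff_right inner_add_left inner_add_right inner_commute) algebra
  ultimately have "(norm (T z - z))\<^sup>2 \<le> (1 - t) * (t * D)\<^sup>2 + t * ((1 - t) * D)\<^sup>2 - t * (1 - t) * D\<^sup>2"
    using t by (smt (verit) mult_left_mono)
  also have "\<dots> = 0"
    by (simp add: power2_eq_square algebra_simps)
  finally show "(1 - t) *\<^sub>R p + t *\<^sub>R q \<in> fixpoints T"
    by (simp add: fixpoints_def z_def)
qed

lemma closest_point_fixpoints:
  fixes T :: "'a::euclidean_space \<Rightarrow> 'a"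
  assumes "continuous_on UNIV T" and "fixpoints T \<noteq> {}"
  shows "T (closest_point (fixpoints T) a) = closest_point (fixpoints T) a"
  using closest_point_in_set[OF closed_fixpoints[OF assms(1)] assms(2)] by (simp add: fixpoints_def)

lemma nonneg_recursion_tendsto_zero:
  fixes a \<beta> :: "nat \<Rightarrow> real" and c :: real
  assumes "0 < c" and a_nonneg: "\<And>k. 0 \<le> a k"
    and rec: "\<And>k. (real k + c + 1) * a (Suc k) \<le> (real k + c) * a k + \<beta> k"
    and \<beta>: "\<And>\<epsilon>. 0 < \<epsilon> \<Longrightarrow> eventually (\<lambda>k. \<beta> k \<le> \<epsilon>) sequentially"
  shows "a \<longlonglongrightarrow> 0"
proof (rule LIMSEQ_I)
  fix r :: real
  assume "0 < r"
  define \<epsilon> where "\<epsilon> = r / 2"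
  have "0 < \<epsilon>"
    using \<open>0 < r\<close> by (simp add: \<epsilon>_def)
  then obtain N where N: "\<And>k. N \<le> k \<Longrightarrow> \<beta> k \<le> \<epsilon>"
    using \<beta> by (auto simp: eventually_sequentially)
  define b where "b k = (real k + c) * a k" for k
  have b_growth: "b (N + m) \<le> b N + real m * \<epsilon>" for m
  proof (induction m)
    case (Suc m)
    have "b (N + Suc m) \<le> b (N + m) + \<beta> (N + m)"
      using rec[of "N + m"] by (simp add: b_def add_ac)
    with Suc N[of "N + m"] show ?case
      by (simp add: algebra_simps)
  qed simp
  obtain M :: nat where M: "b N / \<epsilon> < real M"
    using reals_Archimedean2 by blast
  have "norm (a n) < r" if "N + M \<le> n" for n
  proof -
    obtain m where m: "n = N + m" "M \<le> m"
      using \<open>N + M \<le> n\<close> le_Suc_ex by fastforce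
    have "(real n + c) * a n \<le> b N + real m * \<epsilon>"
      using b_growth[of m] by (simp add: b_def m(1))
    also have "\<dots> < \<epsilon> * real M + real m * \<epsilon>"
      using M \<open>0 < \<epsilon>\<close> by (simp add: divide_less_eq mult.commute)
    also have "\<dots> \<le> \<epsilon> * (real n + c) + (real n + c) * \<epsilon>"
      using m \<open>0 < c\<close> \<open>0 < \<epsilon>\<close> by (intro add_mono mult_left_mono mult_right_mono) auto
    also have "\<dots> = (real n + c) * r"
      by (simp add: \<epsilon>_def algebra_simps)
    finally show ?thesis
      using \<open>0 < c\<close> a_nonneg[of n] by (simp add: mult_less_cancel_left_pos)
  qed
  then show "\<exists>no. \<forall>n\<ge>no. norm (a n - 0) < r"
    by auto
qed

lemma LIMSEQ_const_divide_real_add: "(\<lambda>k. C / (real k + c)) \<longlonglongrightarrow> 0"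
  using filterlim_tendsto_add_at_top[OF tendsto_const filterlim_real_sequentially, of c]
  by (intro real_tendsto_divide_at_top[OF tendsto_const]) (simp add: add.commute)

lemma LIMSEQ_Suc_lipschitz_image:
  assumes "L-lipschitz_on UNIV f" and "X \<longlonglongrightarrow> l" and "\<And>k. Y (Suc k) = f (X k)"
  shows "Y \<longlonglongrightarrow> f l"
proof (rule LIMSEQ_imp_Suc)
  show "(\<lambda>k. Y (Suc k)) \<longlonglongrightarrow> f l"
    unfolding assms(3) using continuous_on_tendsto_compose[OF lipschitz_on_continuous_on[OF assms(1)] assms(2)]
    by simp
qed

locale halpern_iteration =
  fixes T :: "'a::euclidean_space \<Rightarrow> 'a" and \<eta> :: "nat \<Rightarrow> 'a"
  assumes nonexpansive: "1-lipschitz_on UNIV T"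
    and step: "\<And>k. (real k + 2) *\<^sub>R \<eta> (Suc k) = \<eta> 0 + (real k + 1) *\<^sub>R T (\<eta> k)"
begin

lemma norm_T_diff_le: "norm (T x - T y) \<le> norm (x - y)"
  using lipschitz_on_normD[OF nonexpansive] by simp

lemma step_centered: "(real k + 2) *\<^sub>R (\<eta> (Suc k) - p) = (\<eta> 0 - p) + (real k + 1) *\<^sub>R (T (\<eta> k) - p)"
proof -
  have "(real k + 2) *\<^sub>R (\<eta> (Suc k) - p) = \<eta> 0 + (real k + 1) *\<^sub>R T (\<eta> k) - (1 + (real k + 1)) *\<^sub>R p"
    by (simp add: step scaleR_diff_right add_ac)
  then show ?thesis
    by (simp add: scaleR_add_left scaleR_diff_right scaleR_2 algebra_simps)
qed

lemma norm_diff_fixpoint_le: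
  assumes "T p = p"
  shows "norm (\<eta> k - p) \<le> norm (\<eta> 0 - p)"
proof (induction k)
  case (Suc k)
  have "(real k + 2) * norm (\<eta> (Suc k) - p) = norm ((\<eta> 0 - p) + (real k + 1) *\<^sub>R (T (\<eta> k) - p))"
    using arg_cong[OF step_centered[of k p], of norm] by simp
  also have "\<dots> \<le> norm (\<eta> 0 - p) + (real k + 1) * norm (T (\<eta> k) - T p)"
    using norm_triangle_ineq[of "\<eta> 0 - p" "(real k + 1) *\<^sub>R (T (\<eta> k) - p)"] assms by simp
  also have "\<dots> \<le> norm (\<eta> 0 - p) + (real k + 1) * norm (\<eta> 0 - p)"
    using norm_T_diff_le[of "\<eta> k" p] Suc.IH by (intro add_left_mono mult_left_mono) auto
  also have "\<dots> = (real k + 2) * norm (\<eta> 0 - p)"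
    by (simp add: algebra_simps)
  finally show ?case
    by (rule mult_left_le_imp_le) simp
qed simp

lemma norm_T_diff_anchor_le:
  assumes "T p = p"
  shows "norm (T (\<eta> k) - \<eta> 0) \<le> 2 * norm (\<eta> 0 - p)"
proof -
  have "norm (T (\<eta> k) - \<eta> 0) \<le> norm (T (\<eta> k) - T p) + norm (p - \<eta> 0)"
    using norm_triangle_ineq[of "T (\<eta> k) - p" "p - \<eta> 0"] assms by simp
  also have "\<dots> \<le> 2 * norm (\<eta> 0 - p)"
    using norm_T_diff_le[of "\<eta> k" p] norm_diff_fixpoint_le[OF assms, of k] by (simp add: norm_minus_commute)
  finally show ?thesis .
qed

lemma step_difference:
  "((real k + 2) * (real k + 3)) *\<^sub>R (\<eta> (Suc (Suc k)) - \<eta> (Suc k))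
     = (real k + 2)\<^sup>2 *\<^sub>R (T (\<eta> (Suc k)) - T (\<eta> k)) + (T (\<eta> k) - \<eta> 0)"
proof -
  have "((real k + 2) * (real k + 3)) *\<^sub>R (\<eta> (Suc (Suc k)) - \<eta> (Suc k))
      = (real k + 2) *\<^sub>R ((real (Suc k) + 2) *\<^sub>R \<eta> (Suc (Suc k))) - (real k + 3) *\<^sub>R ((real k + 2) *\<^sub>R \<eta> (Suc k))"
    by (simp add: scaleR_diff_right mult.commute)
  also have "\<dots> = (real k + 2) *\<^sub>R (\<eta> 0 + (real k + 2) *\<^sub>R T (\<eta> (Suc k)))
      - (real k + 3) *\<^sub>R (\<eta> 0 + (real k + 1) *\<^sub>R T (\<eta> k))"
    by (simp only: step) (simp add: add_ac)
  also have "\<dots> = (real k + 2)\<^sup>2 *\<^sub>R (T (\<eta> (Suc k)) - T (\<eta> k)) + (T (\<eta> k) - \<eta> 0)"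
    by (rule euclidean_eqI) (simp add: inner_simps algebra_simps power2_eq_square)
  finally show ?thesis .
qed

lemma successive_diff_tendsto_zero:
  assumes "T p = p"
  shows "(\<lambda>k. norm (\<eta> (Suc k) - \<eta> k)) \<longlonglongrightarrow> 0"
proof (rule nonneg_recursion_tendsto_zero[where c = 2])
  let ?R = "norm (\<eta> 0 - p)"
  fix k
  have "(real k + 2) * ((real k + 3) * norm (\<eta> (Suc (Suc k)) - \<eta> (Suc k)))
      = norm ((real k + 2)\<^sup>2 *\<^sub>R (T (\<eta> (Suc k)) - T (\<eta> k)) + (T (\<eta> k) - \<eta> 0))"
    using arg_cong[OF step_difference[of k], of norm] by (simp add: mult.assoc)
  also have "\<dots> \<le> (real k + 2)\<^sup>2 * norm (\<eta> (Suc k) - \<eta> k) + 2 * ?R"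
    using norm_triangle_ineq[of "(real k + 2)\<^sup>2 *\<^sub>R (T (\<eta> (Suc k)) - T (\<eta> k))" "T (\<eta> k) - \<eta> 0"]
      norm_T_diff_le[of "\<eta> (Suc k)" "\<eta> k"] norm_T_diff_anchor_le[OF assms, of k]
    by (smt (verit) mult_left_mono norm_scaleR zero_le_power2 abs_of_nonneg)
  finally show "(real k + 2 + 1) * norm (\<eta> (Suc (Suc k)) - \<eta> (Suc k))
      \<le> (real k + 2) * norm (\<eta> (Suc k) - \<eta> k) + 2 * ?R / (real k + 2)"
    by (simp add: field_simps power2_eq_square add_ac)
next
  fix \<epsilon> :: real
  assume "0 < \<epsilon>"
  show "eventually (\<lambda>k. 2 * norm (\<eta> 0 - p) / (real k + 2) \<le> \<epsilon>) sequentially"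
    using order_tendstoD(2)[OF LIMSEQ_const_divide_real_add[of "2 * norm (\<eta> 0 - p)" 2] \<open>0 < \<epsilon>\<close>]
    by (rule eventually_mono) simp
qed simp_all

lemma asymptotically_regular:
  assumes "T p = p"
  shows "(\<lambda>k. \<eta> k - T (\<eta> k)) \<longlonglongrightarrow> 0"
proof (rule Lim_null_comparison)
  let ?R = "norm (\<eta> 0 - p)"
  have "norm (\<eta> (Suc k) - T (\<eta> k)) \<le> 2 * ?R / (real k + 2)" for k
  proof -
    have "(real k + 2) *\<^sub>R (\<eta> (Suc k) - T (\<eta> k)) = (real k + 2) *\<^sub>R \<eta> (Suc k) - (real k + 2) *\<^sub>R T (\<eta> k)"
      by (simp add: scaleR_diff_right)
    also have "\<dots> = \<eta> 0 + (real k + 1) *\<^sub>R T (\<eta> k) - (real k + 2) *\<^sub>R T (\<eta> k)"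
      by (simp only: step)
    also have "\<dots> = \<eta> 0 - T (\<eta> k)"
      by (rule euclidean_eqI) (simp add: inner_simps algebra_simps)
    finally have "(real k + 2) * norm (\<eta> (Suc k) - T (\<eta> k)) = norm (T (\<eta> k) - \<eta> 0)"
      by (metis abs_of_nonneg norm_minus_commute norm_scaleR of_nat_0_le_iff add_nonneg_nonneg zero_le_numeral)
    also have "\<dots> \<le> 2 * ?R"
      by (rule norm_T_diff_anchor_le[OF assms])
    finally show ?thesis
      by (simp add: field_simps)
  qed
  moreover have "norm (\<eta> k - T (\<eta> k)) \<le> norm (\<eta> (Suc k) - \<eta> k) + norm (\<eta> (Suc k) - T (\<eta> k))" for k
    using norm_triangle_ineq[of "\<eta> k - \<eta> (Suc k)" "\<eta> (Suc k) - T (\<eta> k)"] by (simp add: norm_minus_commute)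
  ultimately show "eventually (\<lambda>k. norm (\<eta> k - T (\<eta> k)) \<le> norm (\<eta> (Suc k) - \<eta> k) + 2 * ?R / (real k + 2))
      sequentially"
    by (intro always_eventually allI) (meson add_left_mono order_trans)
  show "(\<lambda>k. norm (\<eta> (Suc k) - \<eta> k) + 2 * ?R / (real k + 2)) \<longlonglongrightarrow> 0"
    using tendsto_add[OF successive_diff_tendsto_zero[OF assms] LIMSEQ_const_divide_real_add] by simp
qed

lemma norm_square_step:
  assumes "T p = p"
  shows "(real k + 2) * (norm (\<eta> (Suc k) - p))\<^sup>2
    \<le> (real k + 1) * (norm (\<eta> k - p))\<^sup>2 + 2 * inner (\<eta> 0 - p) (\<eta> (Suc k) - p)"
proof -
  define X U N where "X = \<eta> (Suc k) - p" and "U = \<eta> 0 - p" and "N = norm (\<eta> k - p)"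
  have Y: "(real k + 1) *\<^sub>R (T (\<eta> k) - p) = (real k + 2) *\<^sub>R X - U"
    using step_centered[of k p] by (simp add: X_def U_def algebra_simps)
  have "((real k + 1) * norm (T (\<eta> k) - p))\<^sup>2
      = (real k + 2)\<^sup>2 * (norm X)\<^sup>2 - 2 * (real k + 2) * inner U X + (norm U)\<^sup>2"
    using arg_cong[OF Y, of "\<lambda>y. (norm y)\<^sup>2"]
    by (simp add: power2_norm_eq_inner inner_diff_left inner_diff_right inner_commute power_mult_distrib)
      (simp add: power2_eq_square algebra_simps)
  moreover have "((real k + 1) * norm (T (\<eta> k) - p))\<^sup>2 \<le> ((real k + 1) * N)\<^sup>2"
    using norm_T_diff_le[of "\<eta> k" p] assms by (auto simp: N_def intro!: power_mono mult_left_mono)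
  moreover have "((real k + 1) * N)\<^sup>2 \<le> (real k + 2) * ((real k + 1) * N\<^sup>2)"
    using mult_right_mono[of "real k + 1" "real k + 2" "(real k + 1) * N\<^sup>2"]
    by (simp add: power_mult_distrib power2_eq_square ac_simps N_def)
  ultimately have "(real k + 2)\<^sup>2 * (norm X)\<^sup>2 \<le> (real k + 2) * ((real k + 1) * N\<^sup>2) + 2 * (real k + 2) * inner U X"
    using zero_le_power2[of "norm U"] by linarith
  also have "\<dots> = (real k + 2) * ((real k + 1) * N\<^sup>2 + 2 * inner U X)"
    by (simp add: algebra_simps)
  finally have "(real k + 2) * ((real k + 2) * (norm X)\<^sup>2) \<le> (real k + 2) * ((real k + 1) * N\<^sup>2 + 2 * inner U X)"
    by (simp add: power2_eq_square mult.assoc)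
  then show ?thesis
    unfolding X_def U_def N_def by (rule mult_left_le_imp_le) simp
qed

lemma eventually_inner_anchor_le:
  assumes "fixpoints T \<noteq> {}" and "0 < \<epsilon>"
  defines "p \<equiv> closest_point (fixpoints T) (\<eta> 0)"
  shows "eventually (\<lambda>k. inner (\<eta> 0 - p) (\<eta> k - p) \<le> \<epsilon>) sequentially"
proof (rule ccontr)
  have closed: "closed (fixpoints T)" and "convex (fixpoints T)"
    using nonexpansive by (auto intro: closed_fixpoints convex_fixpoints lipschitz_on_continuous_on)
  have "T p = p"
    unfolding p_def using lipschitz_on_continuous_on[OF nonexpansive] assms(1)
    by (rule closest_point_fixpoints)
  assume "\<not> eventually (\<lambda>k. inner (\<eta> 0 - p) (\<eta> k - p) \<le> \<epsilon>) sequentially"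
  then have "infinite {k. \<epsilon> < inner (\<eta> 0 - p) (\<eta> k - p)}"
    by (simp add: eventually_sequentially infinite_nat_iff_unbounded_le not_le)
  then obtain r :: "nat \<Rightarrow> nat" where "strict_mono r" and r: "\<And>n. \<epsilon> < inner (\<eta> 0 - p) (\<eta> (r n) - p)"
    using infinite_enumerate by blast
  have "\<eta> (r n) \<in> cball p (norm (\<eta> 0 - p))" for n
    using norm_diff_fixpoint_le[OF \<open>T p = p\<close>] by (simp add: dist_norm norm_minus_commute)
  then obtain q s where "strict_mono s" and q: "(\<eta> \<circ> r \<circ> s) \<longlonglongrightarrow> q"
    using compact_imp_seq_compact[OF compact_cball, unfolded seq_compact_def] by (metis comp_apply)
  have "strict_mono (r \<circ> s)"
    using \<open>strict_mono r\<close> \<open>strict_mono s\<close> by (rule strict_mono_o)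
  have "isCont T q"
    using lipschitz_on_continuous_on[OF nonexpansive] by (simp add: continuous_on_eq_continuous_at)
  then have "(\<lambda>n. (\<eta> \<circ> r \<circ> s) n - T ((\<eta> \<circ> r \<circ> s) n)) \<longlonglongrightarrow> q - T q"
    by (intro tendsto_diff q isCont_tendsto_compose[OF _ q])
  moreover have "(\<lambda>n. (\<eta> \<circ> r \<circ> s) n - T ((\<eta> \<circ> r \<circ> s) n)) \<longlonglongrightarrow> 0"
    using LIMSEQ_subseq_LIMSEQ[OF asymptotically_regular[OF \<open>T p = p\<close>] \<open>strict_mono (r \<circ> s)\<close>]
    by (simp add: o_def)
  ultimately have "q \<in> fixpoints T"
    using LIMSEQ_unique by (fastforce simp: fixpoints_def)
  have "(\<lambda>n. inner (\<eta> 0 - p) ((\<eta> \<circ> r \<circ> s) n - p)) \<longlonglongrightarrow> inner (\<eta> 0 - p) (q - p)"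
    by (intro tendsto_intros q)
  then have "\<epsilon> \<le> inner (\<eta> 0 - p) (q - p)"
    using r by (intro LIMSEQ_le_const) (auto intro: less_imp_le)
  moreover have "inner (\<eta> 0 - p) (q - p) \<le> 0"
    unfolding p_def using \<open>convex (fixpoints T)\<close> closed \<open>q \<in> fixpoints T\<close> by (rule closest_point_dot)
  ultimately show False
    using \<open>0 < \<epsilon>\<close> by simp
qed

theorem tendsto_closest_point:
  assumes "fixpoints T \<noteq> {}"
  shows "\<eta> \<longlonglongrightarrow> closest_point (fixpoints T) (\<eta> 0)"
proof -
  define p where "p = closest_point (fixpoints T) (\<eta> 0)"
  have "T p = p"
    unfolding p_def using lipschitz_on_continuous_on[OF nonexpansive] assms
    by (rule closest_point_fixpoints)
  have "(\<lambda>k. (norm (\<eta> k - p))\<^sup>2) \<longlonglongrightarrow> 0"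
  proof (rule nonneg_recursion_tendsto_zero[where c = 1])
    show "(real k + 1 + 1) * (norm (\<eta> (Suc k) - p))\<^sup>2
        \<le> (real k + 1) * (norm (\<eta> k - p))\<^sup>2 + 2 * inner (\<eta> 0 - p) (\<eta> (Suc k) - p)" for k
      using norm_square_step[OF \<open>T p = p\<close>, of k] by (simp add: add.assoc)
    show "eventually (\<lambda>k. 2 * inner (\<eta> 0 - p) (\<eta> (Suc k) - p) \<le> \<epsilon>) sequentially" if "0 < \<epsilon>" for \<epsilon>
    proof -
      have "eventually (\<lambda>k. 2 * inner (\<eta> 0 - p) (\<eta> k - p) \<le> \<epsilon>) sequentially"
        using eventually_inner_anchor_le[OF assms, of "\<epsilon> / 2"] that by (simp add: p_def mult.commute)
      then show ?thesis
        using eventually_sequentially_Suc[of "\<lambda>k. 2 * inner (\<eta> 0 - p) (\<eta> k - p) \<le> \<epsilon>"] by simp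
    qed
  qed simp_all
  then have "(\<lambda>k. norm (\<eta> k - p)) \<longlonglongrightarrow> 0"
    using tendsto_real_sqrt by fastforce
  then show ?thesis
    unfolding p_def[symmetric] by (simp add: LIM_zero_iff tendsto_norm_zero_iff)
qed

end

lemma halpern_iterationI:
  fixes T :: "'a::euclidean_space \<Rightarrow> 'a"
  assumes "1-lipschitz_on UNIV T"
    and "\<And>k. \<eta> (Suc k) = (1 / (real k + 2)) *\<^sub>R \<eta> 0 + ((real k + 1) / (real k + 2)) *\<^sub>R T (\<eta> k)"
  shows "halpern_iteration T \<eta>"
proof
  show "(real k + 2) *\<^sub>R \<eta> (Suc k) = \<eta> 0 + (real k + 1) *\<^sub>R T (\<eta> k)" for k
    using of_nat_0_le_iff[of k] by (simp add: assms(2) scaleR_add_right)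
qed (fact assms(1))

section \<open>The Peaceman-Rachford operator\<close>

lemma PR_op_lipschitz:
  fixes M1 M2 :: "'a::euclidean_space \<Rightarrow> 'a set"
  assumes "maximal_monotone M1" and "maximal_monotone M2" and "0 < \<sigma>"
  shows "1-lipschitz_on UNIV (PR_op \<sigma> M1 M2)"
proof -
  have R1: "1-lipschitz_on UNIV (refl_resolvent (op_scale \<sigma> M1))"
    and R2: "1-lipschitz_on UNIV (refl_resolvent (op_scale \<sigma> M2))"
    using assms by (simp_all add: refl_resolvent_lipschitz maximal_monotone_op_scale)
  from lipschitz_on_compose[OF R2 lipschitz_on_subset[OF R1 subset_UNIV]] show ?thesis
    by (simp add: PR_op_def)
qed

lemma PR_op_fixpoints_nonempty:
  fixes M1 M2 :: "'a::euclidean_space \<Rightarrow> 'a set"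
  assumes "maximal_monotone M1" and "maximal_monotone M2" and "0 < \<sigma>"
    and "zer (op_sum M1 M2) \<noteq> {}"
  shows "fixpoints (PR_op \<sigma> M1 M2) \<noteq> {}"
proof -
  obtain z a where a1: "a \<in> M1 z" and a2: "- a \<in> M2 z"
    using assms(4) by (auto simp: zer_def op_sum_def add_eq_0_iff)
  have mono1: "monotone_op (op_scale \<sigma> M1)" and mono2: "monotone_op (op_scale \<sigma> M2)"
    using assms by (simp_all add: maximal_monotone_imp_monotone_op maximal_monotone_op_scale)
  have "resolvent (op_scale \<sigma> M2) (z - \<sigma> *\<^sub>R a) = z"
    using a2 by (intro resolvent_eqI[OF mono2]) (force simp: op_scale_def)
  moreover have "resolvent (op_scale \<sigma> M1) (z + \<sigma> *\<^sub>R a) = z"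
    using a1 by (intro resolvent_eqI[OF mono1]) (auto simp: op_scale_def)
  ultimately have "PR_op \<sigma> M1 M2 (z - \<sigma> *\<^sub>R a) = z - \<sigma> *\<^sub>R a"
    by (simp add: PR_op_def refl_resolvent_def scaleR_2 algebra_simps)
  then show ?thesis
    by (auto simp: fixpoints_def)
qed

lemma PR_op_fixpoint_resolvent:
  assumes "PR_op \<sigma> M1 M2 \<xi> = \<xi>"
  shows "resolvent (op_scale \<sigma> M1) (refl_resolvent (op_scale \<sigma> M2) \<xi>) = resolvent (op_scale \<sigma> M2) \<xi>"
  using assms by (simp add: PR_op_def refl_resolvent_def scaleR_2 algebra_simps)
    (metis add_diff_cancel_left' scaleR_2 scaleR_cancel_left zero_neq_numeral)

lemma PR_op_fixpoint_imp_zero: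
  fixes M1 M2 :: "'a::euclidean_space \<Rightarrow> 'a set"
  assumes "maximal_monotone M1" and "maximal_monotone M2" and "0 < \<sigma>"
    and "PR_op \<sigma> M1 M2 \<xi> = \<xi>"
  shows "resolvent (op_scale \<sigma> M2) \<xi> \<in> zer (op_sum M1 M2)"
proof -
  let ?w = "resolvent (op_scale \<sigma> M2) \<xi>"
  have "refl_resolvent (op_scale \<sigma> M2) \<xi> - ?w \<in> op_scale \<sigma> M1 ?w"
    using resolvent_mem[OF maximal_monotone_op_scale[OF assms(1,3)]] PR_op_fixpoint_resolvent[OF assms(4)]
    by metis
  then obtain a where "a \<in> M1 ?w" and a: "?w - \<xi> = \<sigma> *\<^sub>R a"
    by (auto simp: op_scale_def refl_resolvent_def scaleR_2 algebra_simps)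
  obtain b where "b \<in> M2 ?w" and b: "\<xi> - ?w = \<sigma> *\<^sub>R b"
    using resolvent_mem[OF maximal_monotone_op_scale[OF assms(2,3)], of \<xi>] by (auto simp: op_scale_def)
  have "\<sigma> *\<^sub>R (a + b) = 0"
    using a b by (simp add: scaleR_add_right flip: a b)
  then have "a + b = 0"
    using \<open>0 < \<sigma>\<close> by simp
  with \<open>a \<in> M1 ?w\<close> \<open>b \<in> M2 ?w\<close> show ?thesis
    by (auto simp: zer_def op_sum_def)
qed

theorem corollary3p2:
  fixes M1 M2 :: "'a::euclidean_space \<Rightarrow> 'a set"
    and \<sigma> :: real and w x v \<eta> :: "nat \<Rightarrow> 'a"
  assumes "maximal_monotone M1" and "maximal_monotone M2"
    and "maximal_monotone (op_sum M1 M2)"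
    and "zer (op_sum M1 M2) \<noteq> {}"
    and "\<sigma> > 0"
    and w_def: "\<And>k. w (Suc k) = resolvent (op_scale \<sigma> M2) (\<eta> k)"
    and x_def: "\<And>k. x (Suc k) = resolvent (op_scale \<sigma> M1) (2 *\<^sub>R w (Suc k) - \<eta> k)"
    and v_def: "\<And>k. v (Suc k) = 2 *\<^sub>R x (Suc k) - (2 *\<^sub>R w (Suc k) - \<eta> k)"
    and eta_def: "\<And>k. \<eta> (Suc k) = (1 / (real k + 2)) *\<^sub>R \<eta> 0
                                  + ((real k + 1) / (real k + 2)) *\<^sub>R v (Suc k)"
  shows "let \<eta>s = closest_point (fixpoints (PR_op \<sigma> M1 M2)) (\<eta> 0);
             ws = resolvent (op_scale \<sigma> M2) \<eta>s
         in \<eta> \<longlonglongrightarrow> \<eta>s \<and> v \<longlonglongrightarrow> \<eta>s \<and> x \<longlonglongrightarrow> ws \<and> w \<longlonglongrightarrow> ws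
            \<and> ws \<in> zer (op_sum M1 M2)"
proof -
  let ?T = "PR_op \<sigma> M1 M2" and ?J1 = "resolvent (op_scale \<sigma> M1)"
    and ?J2 = "resolvent (op_scale \<sigma> M2)" and ?R2 = "refl_resolvent (op_scale \<sigma> M2)"
  define \<eta>s where "\<eta>s = closest_point (fixpoints ?T) (\<eta> 0)"
  have mm: "maximal_monotone (op_scale \<sigma> M1)" "maximal_monotone (op_scale \<sigma> M2)"
    using assms(1,2,5) by (simp_all add: maximal_monotone_op_scale)
  have T_lip: "1-lipschitz_on UNIV ?T"
    by (rule PR_op_lipschitz[OF assms(1,2,5)])
  have J1_R2_lip: "1-lipschitz_on UNIV (?J1 \<circ> ?R2)"
    using lipschitz_on_compose[OF refl_resolvent_lipschitz[OF mm(2)]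
        lipschitz_on_subset[OF resolvent_lipschitz[OF mm(1)] subset_UNIV]] by simp
  have v_T: "v (Suc k) = ?T (\<eta> k)" and x_J1: "x (Suc k) = (?J1 \<circ> ?R2) (\<eta> k)" for k
    by (simp_all add: v_def x_def w_def PR_op_def refl_resolvent_def)
  have "halpern_iteration ?T \<eta>"
    using T_lip by (rule halpern_iterationI) (simp add: eta_def v_T)
  moreover have "fixpoints ?T \<noteq> {}"
    by (rule PR_op_fixpoints_nonempty[OF assms(1,2,5,4)])
  ultimately have "\<eta> \<longlonglongrightarrow> \<eta>s" and "?T \<eta>s = \<eta>s"
    unfolding \<eta>s_def using lipschitz_on_continuous_on[OF T_lip]
    by (simp_all add: halpern_iteration.tendsto_closest_point closest_point_fixpoints)
  moreover have "v \<longlonglongrightarrow> ?T \<eta>s" and "w \<longlonglongrightarrow> ?J2 \<eta>s" and "x \<longlonglongrightarrow> (?J1 \<circ> ?R2) \<eta>s"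
    by (fact LIMSEQ_Suc_lipschitz_image[OF T_lip \<open>\<eta> \<longlonglongrightarrow> \<eta>s\<close> v_T]
        LIMSEQ_Suc_lipschitz_image[OF resolvent_lipschitz[OF mm(2)] \<open>\<eta> \<longlonglongrightarrow> \<eta>s\<close> w_def]
        LIMSEQ_Suc_lipschitz_image[OF J1_R2_lip \<open>\<eta> \<longlonglongrightarrow> \<eta>s\<close> x_J1])+
  ultimately show ?thesis
    using PR_op_fixpoint_resolvent[of \<sigma> M1 M2 \<eta>s] PR_op_fixpoint_imp_zero[OF assms(1,2,5), of \<eta>s]
    by (simp add: \<eta>s_def[symmetric] Let_def)
qed

end
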